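(* (a) Every countably tight $L$-selective space is Fr\'echet. (b) Every countable subspace of an $L$-selective space is Fr\'echet. (c) Every strongly $L$-selective space is Fr\'echet.
   Context: All spaces are assumed $T_1$. For spaces $Y$, $X$, a map $\varphi:Y\to\mathcal P(X)\setminus\{\emptyset\}$ is lower semicontinuous (l.s.c.) if $\{y:\varphi(y)\cap U\neq\emptyset\}$ is open in $Y$ for every open $U\subseteq X$; a selection is a map $f:Y\to X$ with $f(y)\in\varphi(y)$ for all $y$. $X$ is strongly $Y$-selective if every l.s.c. map $Y\to\mathcal P(X)\setminus\{\emptyset\}$ has a continuous selection, and $Y$-selective if every l.s.c. map from $Y$ to the nonempty closed subsets of $X$ has a continuous selection. (Strongly) $L$-selective means (strongly) $(\omega+1)$-selective, with $\omega+1$ carrying the order topology. A space is Fr\'echet if whenever $x\in\overline A$ there is a sequence in $A$ converging to $x$; countably tight if whenever $x\in\overline A$ there is a countable $B\subseteq A$ with $x\in\overline B$. *)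

theory Defs
  imports "HOL-Analysis.Analysis" "HOL-Library.Extended_Nat" "HOL-Library.Extended_Real"
begin

definition omega_plus_one :: "enat topology" where
  "omega_plus_one = euclidean"

definition lsc_map :: "'b topology \<Rightarrow> 'a topology \<Rightarrow> ('b \<Rightarrow> 'a set) \<Rightarrow> bool" where
  "lsc_map Y X \<phi> \<longleftrightarrow>
     (\<forall>y\<in>topspace Y. \<phi> y \<subseteq> topspace X \<and> \<phi> y \<noteq> {}) \<and>
     (\<forall>U. openin X U \<longrightarrow> openin Y {y \<in> topspace Y. \<phi> y \<inter> U \<noteq> {}})"

definition strongly_selective :: "'b topology \<Rightarrow> 'a topology \<Rightarrow> bool" where
  "strongly_selective Y X \<longleftrightarrow>
     (\<forall>\<phi>. lsc_map Y X \<phi> \<longrightarrow>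
        (\<exists>f. continuous_map Y X f \<and> (\<forall>y\<in>topspace Y. f y \<in> \<phi> y)))"

definition selective :: "'b topology \<Rightarrow> 'a topology \<Rightarrow> bool" where
  "selective Y X \<longleftrightarrow>
     (\<forall>\<phi>. lsc_map Y X \<phi> \<and> (\<forall>y\<in>topspace Y. closedin X (\<phi> y)) \<longrightarrow>
        (\<exists>f. continuous_map Y X f \<and> (\<forall>y\<in>topspace Y. f y \<in> \<phi> y)))"

definition L_selective :: "'a topology \<Rightarrow> bool" where
  "L_selective X \<longleftrightarrow> selective omega_plus_one X"

definition strongly_L_selective :: "'a topology \<Rightarrow> bool" where
  "strongly_L_selective X \<longleftrightarrow> strongly_selective omega_plus_one X"

definition frechet_space :: "'a topology \<Rightarrow> bool" where
  "frechet_space X \<longleftrightarrow>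
     (\<forall>A x. A \<subseteq> topspace X \<and> x \<in> X closure_of A \<longrightarrow>
        (\<exists>s. (\<forall>n. s n \<in> A) \<and> limitin X s x sequentially))"

definition countably_tight :: "'a topology \<Rightarrow> bool" where
  "countably_tight X \<longleftrightarrow>
     (\<forall>A x. A \<subseteq> topspace X \<and> x \<in> X closure_of A \<longrightarrow>
        (\<exists>B. B \<subseteq> A \<and> countable B \<and> x \<in> X closure_of B))"

end

theory Submission
  imports Defs
begin

text \<open>
  A continuous selection f of a lower semicontinuous map \<phi> on \<omega>+1 with \<phi> \<omega> = {x} and
  \<phi> n \<subseteq> A yields the sequence f 0, f 1, \<dots> in A converging to f \<omega> = x. Lower
  semicontinuity at \<omega> only asks that every neighbourhood of x eventually meets \<phi> n, which
  holds for \<phi> n = A whenever x is in the closure of A. The values A are not closed, so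
  ordinary L-selectivity requires \<phi> n to be finite instead: enumerate a countable A and
  take its first n+1 points, which are closed in a T1 space. Countable tightness reduces
  the general case to countable A.
\<close>

lemma topspace_omega_plus_one [simp]: "topspace omega_plus_one = UNIV"
  by (simp add: omega_plus_one_def)

lemma openin_omega_plus_one:
  "openin omega_plus_one S \<longleftrightarrow> (\<infinity> \<in> S \<longrightarrow> (\<exists>n::nat. {enat n<..} \<subseteq> S))"
  by (simp add: omega_plus_one_def open_enat_iff)

lemma limitin_enat_infinity: "limitin omega_plus_one enat \<infinity> sequentially"
  unfolding omega_plus_one_def limitin_canonical_iff
proof (rule order_tendstoI)
  fix a :: enat
  assume "a < \<infinity>"
  then obtain m where "a = enat m" by (cases a) auto
  then show "\<forall>\<^sub>F n in sequentially. a < enat n"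
    by (auto simp: eventually_sequentially intro: exI[of _ "Suc m"])
qed simp

definition approach_map :: "'a \<Rightarrow> (nat \<Rightarrow> 'a set) \<Rightarrow> enat \<Rightarrow> 'a set" where
  "approach_map x F y = (case y of enat n \<Rightarrow> F n | \<infinity> \<Rightarrow> {x})"

lemma approach_map_simps [simp]:
  "approach_map x F (enat n) = F n" "approach_map x F \<infinity> = {x}"
  by (simp_all add: approach_map_def)

lemma lsc_map_approach_map:
  assumes "mono F" and "\<And>n. F n \<noteq> {}" and "(\<Union>n. F n) \<subseteq> topspace X"
    and "x \<in> X closure_of (\<Union>n. F n)"
  shows "lsc_map omega_plus_one X (approach_map x F)"
  unfolding lsc_map_def
proof (intro conjI allI impI ballI)
  fix y :: enat
  show "approach_map x F y \<subseteq> topspace X" "approach_map x F y \<noteq> {}"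
    using assms(2,3) in_closure_of[of x X] assms(4) by (cases y; auto)+
next
  fix U
  assume U: "openin X U"
  let ?V = "{y \<in> topspace omega_plus_one. approach_map x F y \<inter> U \<noteq> {}}"
  show "openin omega_plus_one ?V"
    unfolding openin_omega_plus_one
  proof
    assume "\<infinity> \<in> ?V"
    then have "x \<in> U" by simp
    then obtain a where "a \<in> (\<Union>n. F n)" "a \<in> U"
      using assms(4) U in_closure_of by metis
    then obtain k where "a \<in> F k" "a \<in> U" by blast
    then have "F n \<inter> U \<noteq> {}" if "k \<le> n" for n
      using monoD[OF assms(1) that] by blast
    then have "approach_map x F y \<inter> U \<noteq> {}" if "enat k < y" for y
      using \<open>x \<in> U\<close> that by (cases y) auto
    then show "\<exists>n. {enat n<..} \<subseteq> ?V" by auto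
  qed
qed

lemma selection_approach_map_converges:
  assumes "continuous_map omega_plus_one X f" and "\<And>y. f y \<in> approach_map x F y"
  shows "(\<forall>n. f (enat n) \<in> F n) \<and> limitin X (f \<circ> enat) x sequentially"
proof -
  have "f \<infinity> = x" using assms(2)[of \<infinity>] by simp
  then show ?thesis
    using continuous_map_limit[OF assms(1) limitin_enat_infinity] assms(2)[of "enat _"] by simp
qed

lemma strongly_L_selective_imp_frechet_space:
  assumes "strongly_L_selective X"
  shows "frechet_space X"
  unfolding frechet_space_def
proof (intro allI impI, elim conjE)
  fix A x
  assume "A \<subseteq> topspace X" and x: "x \<in> X closure_of A"
  moreover have "A \<noteq> {}" using x by auto
  ultimately have "lsc_map omega_plus_one X (approach_map x (\<lambda>_. A))"
    by (intro lsc_map_approach_map) (auto simp: mono_def)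
  then obtain f where "continuous_map omega_plus_one X f" "\<And>y. f y \<in> approach_map x (\<lambda>_. A) y"
    using assms unfolding strongly_L_selective_def strongly_selective_def by auto
  from selection_approach_map_converges[OF this]
  show "\<exists>s. (\<forall>n. s n \<in> A) \<and> limitin X s x sequentially" by (intro exI[of _ "f \<circ> enat"]) simp
qed

lemma L_selective_countable_closure_sequence:
  assumes "t1_space X" and "L_selective X" and "countable A" and AX: "A \<subseteq> topspace X"
    and x: "x \<in> X closure_of A"
  shows "\<exists>s. (\<forall>n. s n \<in> A) \<and> limitin X s x sequentially"
proof -
  define F where "F n = from_nat_into A ` {..n}" for n
  have "(\<Union>n. F n) = range (from_nat_into A)"
    unfolding F_def by (auto intro: image_eqI[OF refl, of _ "{.._}"])
  also have "\<dots> = A"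
    using x by (intro range_from_nat_into assms(3)) auto
  finally have F_union: "(\<Union>n. F n) = A" .
  have "lsc_map omega_plus_one X (approach_map x F)"
    by (rule lsc_map_approach_map) (use F_union AX x in \<open>auto simp: F_def mono_def\<close>)
  moreover have "closedin X (approach_map x F y)" for y
    using assms(1) F_union AX closure_of_subset_topspace[of X A] x
    unfolding t1_space_closedin_finite by (cases y) (auto simp: F_def)
  ultimately obtain f where "continuous_map omega_plus_one X f" "\<And>y. f y \<in> approach_map x F y"
    using assms(2) unfolding L_selective_def selective_def by auto
  from selection_approach_map_converges[OF this]
  show ?thesis using F_union by (intro exI[of _ "f \<circ> enat"]) auto
qed

lemma countably_tight_L_selective_imp_frechet_space:
  assumes "t1_space X" and "countably_tight X" and "L_selective X"
  shows "frechet_space X"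
  unfolding frechet_space_def
proof (intro allI impI, elim conjE)
  fix A x
  assume "A \<subseteq> topspace X" and "x \<in> X closure_of A"
  then obtain B where "B \<subseteq> A" "countable B" "x \<in> X closure_of B"
    using assms(2) unfolding countably_tight_def by blast
  moreover from this \<open>A \<subseteq> topspace X\<close> obtain s where "\<forall>n. s n \<in> B" "limitin X s x sequentially"
    using L_selective_countable_closure_sequence[OF assms(1,3), of B x] by blast
  ultimately show "\<exists>s. (\<forall>n. s n \<in> A) \<and> limitin X s x sequentially" by blast
qed

lemma L_selective_imp_frechet_space_countable_subtopology:
  assumes "t1_space X" and "L_selective X" and "countable S"
  shows "frechet_space (subtopology X S)"
  unfolding frechet_space_def
proof (intro allI impI, elim conjE)
  fix A x
  assume "A \<subseteq> topspace (subtopology X S)" and x: "x \<in> subtopology X S closure_of A"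
  then have AS: "A \<subseteq> S" "A \<subseteq> topspace X" by auto
  have "x \<in> S" "x \<in> X closure_of A"
    using x AS unfolding closure_of_subtopology by (auto simp: Int_absorb1)
  moreover obtain s where s: "\<forall>n. s n \<in> A" "limitin X s x sequentially"
    using L_selective_countable_closure_sequence[OF assms(1,2) countable_subset[OF AS(1) assms(3)]
        AS(2) \<open>x \<in> X closure_of A\<close>] by blast
  ultimately have "limitin (subtopology X S) s x sequentially"
    unfolding limitin_subtopology using AS(1) by (auto intro: always_eventually)
  with s(1) show "\<exists>s. (\<forall>n. s n \<in> A) \<and> limitin (subtopology X S) s x sequentially"
    by blast
qed

theorem mainTheorem14:
  fixes X :: "'a topology"
  assumes "t1_space X"
  shows "(countably_tight X \<and> L_selective X \<longrightarrow> frechet_space X) \<and>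
         (L_selective X \<longrightarrow>
            (\<forall>S. S \<subseteq> topspace X \<and> countable S \<longrightarrow> frechet_space (subtopology X S))) \<and>
         (strongly_L_selective X \<longrightarrow> frechet_space X)"
  using countably_tight_L_selective_imp_frechet_space[OF assms]
    L_selective_imp_frechet_space_countable_subtopology[OF assms]
    strongly_L_selective_imp_frechet_space
  by blast

end
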